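(* Let $a$ be a symmetric, sub-gaussian random variable with $\mathbb{E}a^2=1$ and $\|a-g\|_{TV}\le\varepsilon$ where $g\sim N(0,1)$. Let $\mathbf{a}$ be a random vector in $\mathbb{R}^n$ with i.i.d. coordinates distributed as $a$, let $\mathbf{x}\in S^{n-1}$, define $\mathbf{v}_{\mathbf{x}}=\mathbb{E}\,\mathrm{sign}(\langle\mathbf{a},\mathbf{x}\rangle)\mathbf{a}$ and $\lambda=\sqrt{2/\pi}$. Then $$|\langle\mathbf{v}_{\mathbf{x}},\mathbf{x}\rangle-\lambda|=\Big|\mathbb{E}|\langle\mathbf{a},\mathbf{x}\rangle|-\sqrt{2/\pi}\Big|\le4(\mathbb{E}a^4+\mathbb{E}g^4)^{1/4}\varepsilon^{1/4}.$$
   Context: $\|a-g\|_{TV}=\sup_A|P(a\in A)-P(g\in A)|$. $\mathrm{sign}(t)=1$ if $t\ge0$ and $-1$ otherwise. $S^{n-1}$ is the Euclidean unit sphere. *)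

theory Defs
  imports "HOL-Probability.Probability"
begin

definition sign_pm :: "real \<Rightarrow> real" where
  "sign_pm t = (if t \<ge> 0 then 1 else -1)"

definition gauss :: "real measure" where
  "gauss = density lborel std_normal_density"

definition tv_dist :: "real measure \<Rightarrow> real measure \<Rightarrow> real" where
  "tv_dist P Q = (SUP A \<in> sets borel. \<bar>measure P A - measure Q A\<bar>)"

definition subgaussian :: "real measure \<Rightarrow> bool" where
  "subgaussian M \<longleftrightarrow> (\<exists>K>0. \<forall>t\<ge>0. measure M {x. \<bar>x\<bar> \<ge> t} \<le> 2 * exp (- (t^2 / K^2)))"

definition symmetric_law :: "real measure \<Rightarrow> bool" where
  "symmetric_law M \<longleftrightarrow> distr M borel uminus = M"

end

theory Submission
  imports Defs "HOL-Real_Asymp.Real_Asymp"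
begin

text \<open>
  Couple \<open>a\<close> with \<open>g\<close> so that \<open>P(a \<noteq> g) \<le> \<epsilon>\<close>: put the common part \<open>min f h\<close> of the two
  densities on the diagonal and couple the remainders independently. Independent copies of this pair
  couple the product laws, and since symmetry makes the differences \<open>a\<^sub>i - g\<^sub>i\<close> centred and they are
  independent, \<open>\<langle>a, x\<rangle> - \<langle>g, x\<rangle> = \<Sum>x\<^sub>i (a\<^sub>i - g\<^sub>i)\<close> has second moment \<open>V = E(a - g)\<^sup>2\<close>. Hence
  \<open>\<bar>E\<bar>\<langle>a, x\<rangle>\<bar> - E\<bar>\<langle>g, x\<rangle>\<bar>\<bar> \<le> \<surd>V\<close>, and Cauchy-Schwarz on the event \<open>a \<noteq> g\<close> gives
  \<open>V\<^sup>2 \<le> P(a \<noteq> g) E(a - g)\<^sup>4 \<le> 8 \<epsilon> (Ea\<^sup>4 + Eg\<^sup>4)\<close>. Finally \<open>\<langle>g, x\<rangle>\<close> is standard normal, so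
  \<open>E\<bar>\<langle>g, x\<rangle>\<bar> = \<surd>(2/\<pi>)\<close>, and \<open>\<langle>v\<^sub>x, x\<rangle> = E sign(\<langle>a, x\<rangle>) \<langle>a, x\<rangle> = E\<bar>\<langle>a, x\<rangle>\<bar>\<close>.
\<close>

lemma power4_diff_le: "(a - b)^4 \<le> 8 * (a^4 + b^4 :: real)"
proof -
  have "(a - b)^2 \<le> 2 * (a^2 + b^2)"
    using sum_squares_ge_zero[of "a + b" 0] by (simp add: power2_eq_square algebra_simps)
  then have "((a - b)^2)^2 \<le> (2 * (a^2 + b^2))^2"
    by (intro power_mono) auto
  also have "\<dots> \<le> 8 * (a^4 + b^4)"
    using sum_squares_ge_zero[of "a^2 - b^2" 0] by (simp add: power2_eq_square algebra_simps eval_nat_numeral)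
  finally show ?thesis by simp
qed

lemma abs_mult_le_sum_squares: "\<bar>a * b\<bar> \<le> a^2 + (b^2 :: real)"
proof -
  have "2 * (\<bar>a\<bar> * \<bar>b\<bar>) \<le> a^2 + b^2"
    using sum_squares_ge_zero[of "\<bar>a\<bar> - \<bar>b\<bar>" 0] by (simp add: power2_eq_square algebra_simps)
  moreover have "0 \<le> \<bar>a\<bar> * \<bar>b\<bar>" by simp
  ultimately show ?thesis unfolding abs_mult by linarith
qed

lemma sign_pm_mult_self: "sign_pm t * t = \<bar>t\<bar>"
  by (simp add: sign_pm_def)

lemma Cauchy_Schwarz_integral:
  fixes f g :: "'a \<Rightarrow> real"
  assumes "integrable M (\<lambda>x. f x^2)" "integrable M (\<lambda>x. g x^2)" "integrable M (\<lambda>x. f x * g x)"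
  shows "(\<integral>x. f x * g x \<partial>M)^2 \<le> (\<integral>x. f x^2 \<partial>M) * (\<integral>x. g x^2 \<partial>M)"
proof -
  define a b c where "a = (\<integral>x. f x^2 \<partial>M)" and "b = (\<integral>x. f x * g x \<partial>M)" and "c = (\<integral>x. g x^2 \<partial>M)"
  have nonneg: "0 \<le> t^2 * a - 2 * t * b + c" for t
  proof -
    have "0 \<le> (\<integral>x. (t * f x - g x)^2 \<partial>M)" by (rule integral_nonneg_AE) auto
    also have "\<dots> = (\<integral>x. t^2 * f x^2 - 2 * t * (f x * g x) + g x^2 \<partial>M)"
      by (intro Bochner_Integration.integral_cong) (auto simp: power2_eq_square algebra_simps)
    also have "\<dots> = t^2 * a - 2 * t * b + c"
      using assms by (simp add: a_def b_def c_def)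
    finally show ?thesis .
  qed
  have "a \<ge> 0" unfolding a_def by (rule integral_nonneg_AE) auto
  have "b^2 \<le> a * c"
  proof (cases "a = 0")
    case True
    show ?thesis
    proof (rule ccontr)
      assume "\<not> b^2 \<le> a * c"
      with True have "b \<noteq> 0" by auto
      \<comment> \<open>the quadratic degenerates to a line with nonzero slope\<close>
      with True have "((c + 1) / (2 * b))^2 * a - 2 * ((c + 1) / (2 * b)) * b + c = -1"
        by (simp add: field_simps)
      with nonneg[of "(c + 1) / (2 * b)"] show False by linarith
    qed
  next
    case False
    with \<open>a \<ge> 0\<close> have "a > 0" by simp
    have "(b / a)^2 * a - 2 * (b / a) * b + c = c - b^2 / a"
      using \<open>a > 0\<close> by (simp add: field_simps power2_eq_square)
    with nonneg[of "b / a"] have "b^2 / a \<le> c" by linarith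
    with \<open>a > 0\<close> show ?thesis by (simp add: field_simps mult.commute)
  qed
  then show ?thesis by (simp add: a_def b_def c_def)
qed

lemma (in finite_measure) integrable_power2_if_power4:
  fixes g :: "'a \<Rightarrow> real"
  assumes "g \<in> borel_measurable M" and "integrable M (\<lambda>x. g x^4)"
  shows "integrable M (\<lambda>x. g x^2)"
proof (rule square_integrable_imp_integrable)
  show "integrable M (\<lambda>x. (g x^2)^2)" using assms(2) by (simp flip: power_mult)
qed (use assms(1) in simp)

lemma (in finite_measure) integral_power2_squared_le:
  fixes g :: "'a \<Rightarrow> real"
  assumes [measurable]: "g \<in> borel_measurable M" and "integrable M (\<lambda>x. g x^4)"
  shows "(\<integral>x. g x^2 \<partial>M)^2 \<le> measure M {x \<in> space M. g x \<noteq> 0} * (\<integral>x. g x^4 \<partial>M)"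
proof -
  define S where "S = {x \<in> space M. g x \<noteq> 0}"
  have [measurable]: "S \<in> sets M" unfolding S_def by measurable
  have g4: "integrable M (\<lambda>x. (g x^2)^2)" using assms(2) by simp
  have g2: "integrable M (\<lambda>x. g x^2)"
    using assms by (rule integrable_power2_if_power4)
  have indicator_sq: "(\<lambda>x. (indicator S x :: real)^2) = indicator S"
    by (auto simp: indicator_def fun_eq_iff)
  have "(\<integral>x. g x^2 \<partial>M) = (\<integral>x. indicator S x * g x^2 \<partial>M)"
    by (intro Bochner_Integration.integral_cong) (auto simp: S_def indicator_def)
  also have "(\<dots>)^2 \<le> (\<integral>x. (indicator S x)^2 \<partial>M) * (\<integral>x. (g x^2)^2 \<partial>M)"
  proof (rule Cauchy_Schwarz_integral)
    show "integrable M (\<lambda>x. (indicator S x :: real)^2)"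
      by (simp add: indicator_sq integrable_indicator_iff less_top[symmetric])
    show "integrable M (\<lambda>x. indicator S x * g x^2)"
      using g2 by (subst Bochner_Integration.integrable_cong[where g="\<lambda>x. g x^2"]) (auto simp: S_def indicator_def)
  qed (use g4 in simp)
  also have "(\<integral>x. (indicator S x :: real)^2 \<partial>M) = measure M S"
    by (simp add: indicator_sq)
  finally show ?thesis by (simp add: S_def)
qed

lemma (in prob_space) integral_abs_squared_le:
  fixes g :: "'a \<Rightarrow> real"
  assumes [measurable]: "g \<in> borel_measurable M" and "integrable M (\<lambda>x. g x^2)"
  shows "(\<integral>x. \<bar>g x\<bar> \<partial>M)^2 \<le> (\<integral>x. g x^2 \<partial>M)"
proof -
  have "integrable M (\<lambda>x. \<bar>g x\<bar>)"
    by (rule square_integrable_imp_integrable) (use assms(2) in auto)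
  then show ?thesis
    using variance_positive[of "\<lambda>x. \<bar>g x\<bar>"] variance_eq[of "\<lambda>x. \<bar>g x\<bar>"] assms(2) by simp
qed

lemma summable_power_times_gaussian_tail:
  assumes "K > 0"
  shows "summable (\<lambda>k::nat. (real k + 1)^n * exp (- (real k^2 / K^2)))"
proof (rule summable_comparison_test_ev)
  have "((\<lambda>k::nat. (real k + 1)^n * exp (- (real k^2 / K^2)) * (real k + 1)^2) \<longlongrightarrow> 0) at_top"
    using assms by real_asymp
  then have "eventually (\<lambda>k. (real k + 1)^n * exp (- (real k^2 / K^2)) * (real k + 1)^2 < 1) sequentially"
    by (rule order_tendstoD) simp
  then show "eventually (\<lambda>k. norm ((real k + 1)^n * exp (- (real k^2 / K^2))) \<le> 1 / (real k + 1)^2) sequentially"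
  proof eventually_elim
    case (elim k)
    have "(real k + 1)^n * exp (- (real k^2 / K^2)) \<le> 1 / (real k + 1)^2"
      by (subst pos_le_divide_eq) (simp, use elim in linarith)
    then show ?case by simp
  qed
  show "summable (\<lambda>k::nat. 1 / (real k + 1)^2)"
    using sums_summable[OF inverse_squares_sums] by (simp add: add.commute)
qed

lemma nn_integral_norm_power_le_tail_sum:
  fixes \<mu> :: "real measure"
  assumes sets_\<mu>: "sets \<mu> = sets borel"
  shows "(\<integral>\<^sup>+x. norm (x^n) \<partial>\<mu>) \<le> (\<Sum>k. ennreal ((real k + 1)^n) * emeasure \<mu> {x. real k \<le> \<bar>x\<bar>})"
proof -
  define S where "S = (\<lambda>k::nat. {x::real. real k \<le> \<bar>x\<bar>})"
  have S_sets: "S k \<in> sets \<mu>" for k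
  proof -
    have "{x \<in> space borel. real k \<le> \<bar>x::real\<bar>} \<in> sets borel" by measurable
    then show ?thesis by (simp add: S_def sets_\<mu>)
  qed
  \<comment> \<open>on the layer \<open>k \<le> \<bar>x\<bar> < k + 1\<close> the summand \<open>k\<close> alone dominates \<open>\<bar>x\<bar>\<^sup>n\<close>\<close>
  have layers: "ennreal (norm (x^n)) \<le> (\<Sum>k. ennreal ((real k + 1)^n) * indicator (S k) x)" for x :: real
  proof -
    define k where "k = nat \<lfloor>\<bar>x\<bar>\<rfloor>"
    have "\<bar>x\<bar> \<le> real k + 1" "real k \<le> \<bar>x\<bar>"
      unfolding k_def by linarith+
    then have "ennreal (norm (x^n)) \<le> ennreal ((real k + 1)^n) * indicator (S k) x"
      by (simp add: S_def ennreal_leI power_abs power_mono)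
    also have "\<dots> \<le> (\<Sum>k. ennreal ((real k + 1)^n) * indicator (S k) x)"
      by (metis ennreal_suminf_lessD not_le order_less_irrefl)
    finally show ?thesis .
  qed
  have "(\<integral>\<^sup>+x. norm (x^n) \<partial>\<mu>) \<le> (\<integral>\<^sup>+x. (\<Sum>k. ennreal ((real k + 1)^n) * indicator (S k) x) \<partial>\<mu>)"
    by (intro nn_integral_mono layers)
  also have "\<dots> = (\<Sum>k. \<integral>\<^sup>+x. ennreal ((real k + 1)^n) * indicator (S k) x \<partial>\<mu>)"
    using S_sets by (intro nn_integral_suminf) auto
  also have "\<dots> = (\<Sum>k. ennreal ((real k + 1)^n) * emeasure \<mu> (S k))"
    using S_sets by (simp add: nn_integral_cmult_indicator)
  finally show ?thesis by (simp add: S_def)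
qed

lemma subgaussian_integrable_power:
  fixes \<mu> :: "real measure"
  assumes "prob_space \<mu>" and sets_\<mu>: "sets \<mu> = sets borel" and "subgaussian \<mu>"
  shows "integrable \<mu> (\<lambda>t. t^n)"
proof -
  interpret prob_space \<mu> by fact
  obtain K where "K > 0" and tail: "\<And>t. t \<ge> 0 \<Longrightarrow> prob {x. \<bar>x\<bar> \<ge> t} \<le> 2 * exp (- (t^2 / K^2))"
    using \<open>subgaussian \<mu>\<close> unfolding subgaussian_def by auto
  have "(\<integral>\<^sup>+x. norm (x^n) \<partial>\<mu>) \<le> (\<Sum>k. ennreal ((real k + 1)^n) * emeasure \<mu> {x. real k \<le> \<bar>x\<bar>})"
    by (rule nn_integral_norm_power_le_tail_sum[OF sets_\<mu>])
  also have "\<dots> \<le> (\<Sum>k. ennreal (2 * ((real k + 1)^n * exp (- (real k^2 / K^2)))))"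
  proof (intro suminf_le summableI)
    fix k
    have "emeasure \<mu> {x. real k \<le> \<bar>x\<bar>} \<le> ennreal (2 * exp (- (real k^2 / K^2)))"
      using tail[of "real k"] by (simp add: emeasure_eq_measure ennreal_leI)
    then have "ennreal ((real k + 1)^n) * emeasure \<mu> {x. real k \<le> \<bar>x\<bar>}
        \<le> ennreal ((real k + 1)^n) * ennreal (2 * exp (- (real k^2 / K^2)))"
      by (rule mult_left_mono) simp
    also have "\<dots> = ennreal (2 * ((real k + 1)^n * exp (- (real k^2 / K^2))))"
      by (simp add: ennreal_mult[symmetric] mult.left_commute)
    finally show "ennreal ((real k + 1)^n) * emeasure \<mu> {x. real k \<le> \<bar>x\<bar>} \<le> \<dots>" .
  qed
  also have "\<dots> < \<infinity>"
    using ennreal_suminf_neq_top[OF summable_mult[OF summable_power_times_gaussian_tail[OF \<open>K > 0\<close>]]]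
    by (simp add: top.not_eq_extremum)
  finally have "(\<integral>\<^sup>+x. norm (x^n) \<partial>\<mu>) < \<infinity>" .
  moreover have "(\<lambda>t::real. t^n) \<in> borel_measurable \<mu>"
    by (simp add: measurable_cong_sets[OF sets_\<mu> refl])
  ultimately show ?thesis
    by (rule integrableI_bounded[rotated])
qed

lemma symmetric_law_integral_id:
  fixes \<mu> :: "real measure"
  assumes "symmetric_law \<mu>" and "sets \<mu> = sets borel"
  shows "(\<integral>t. t \<partial>\<mu>) = 0"
proof -
  have "(\<integral>t. t \<partial>\<mu>) = (\<integral>t. t \<partial>distr \<mu> borel uminus)"
    using assms(1) unfolding symmetric_law_def by simp
  also have "\<dots> = - (\<integral>t. t \<partial>\<mu>)"
    by (subst integral_distr) (auto simp: measurable_cong_sets[OF assms(2) refl])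
  finally show ?thesis by simp
qed

lemma prob_space_gauss: "prob_space gauss"
  unfolding gauss_def by (rule prob_space_normal_density) simp

lemma sets_gauss [measurable_cong]: "sets gauss = sets borel"
  unfolding gauss_def by simp

lemma integrable_gauss_power: "integrable gauss (\<lambda>t. t^n)"
  unfolding gauss_def by (subst integrable_density) (auto simp: integrable_std_normal_moment)

lemma integral_gauss_id: "(\<integral>t. t \<partial>gauss) = 0"
  unfolding gauss_def using integral_std_normal_moment_odd[of 0] by (subst integral_density) auto

lemma indep_vars_PiM_components:
  assumes "prob_space M" and "J \<noteq> {}"
  shows "prob_space.indep_vars (PiM (UNIV :: 'n::finite set) (\<lambda>_. M)) (\<lambda>_. M) (\<lambda>i a. a i) J"
proof -
  define \<Omega> where "\<Omega> = PiM (UNIV :: 'n set) (\<lambda>_. M)"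
  interpret prob_space \<Omega> unfolding \<Omega>_def by (intro prob_space_PiM assms(1))
  have component: "distr \<Omega> M (\<lambda>a. a i) = M" for i
    unfolding \<Omega>_def by (rule distr_PiM_component) (auto intro: assms(1))
  have "indep_vars (\<lambda>_. M) (\<lambda>i a. a i) J"
  proof (subst indep_vars_iff_distr_eq_PiM)
    show "random_variable M (\<lambda>a. a i)" for i
      unfolding \<Omega>_def by (rule measurable_component_singleton) simp
    have "distr \<Omega> (\<Pi>\<^sub>M i\<in>J. M) (\<lambda>a. \<lambda>i\<in>J. a i) = (\<Pi>\<^sub>M i\<in>J. M)"
      using distr_PiM_reindex[of UNIV "\<lambda>_. M" id J] assms(1) unfolding \<Omega>_def by simp
    then show "distr \<Omega> (\<Pi>\<^sub>M i\<in>J. M) (\<lambda>a. \<lambda>i\<in>J. a i) = (\<Pi>\<^sub>M i\<in>J. distr \<Omega> M (\<lambda>a. a i))"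
      by (simp add: component)
  qed fact
  then show ?thesis unfolding \<Omega>_def .
qed

lemma distributed_inner_PiM_gauss:
  fixes x :: "'n::finite \<Rightarrow> real"
  assumes x_unit: "(\<Sum>i\<in>UNIV. (x i)^2) = 1"
  shows "distributed (PiM UNIV (\<lambda>_. gauss)) lborel (\<lambda>a. \<Sum>i\<in>UNIV. a i * x i) std_normal_density"
proof -
  define \<Omega> where "\<Omega> = PiM (UNIV :: 'n set) (\<lambda>_. gauss)"
  interpret prob_space \<Omega> unfolding \<Omega>_def by (intro prob_space_PiM prob_space_gauss)
  \<comment> \<open>\<open>sum_indep_normal\<close> needs nondegenerate summands, so drop the zero coefficients\<close>
  define J where "J = {i. x i \<noteq> 0}"
  have "J \<noteq> {}"
  proof
    assume "J = {}"
    then have "\<And>i. x i = 0" by (auto simp: J_def)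
    with x_unit show False by simp
  qed
  have "indep_vars (\<lambda>_. gauss) (\<lambda>i a. a i) J"
    using indep_vars_PiM_components[OF prob_space_gauss \<open>J \<noteq> {}\<close>] unfolding \<Omega>_def .
  then have indep: "indep_vars (\<lambda>_. borel) (\<lambda>i a. x i * a i) J"
    using indep_vars_compose2[of "\<lambda>_. gauss" "\<lambda>i a. a i" J "\<lambda>i t. x i * t" "\<lambda>_. borel"]
    by (simp add: measurable_cong_sets[OF sets_gauss refl])
  have std_normal: "distributed \<Omega> lborel (\<lambda>a. a i) std_normal_density" for i
  proof -
    have "distr \<Omega> lborel (\<lambda>a. a i) = distr \<Omega> gauss (\<lambda>a. a i)"
      by (rule distr_cong) (auto simp: sets_gauss)
    also have "\<dots> = gauss"
      unfolding \<Omega>_def by (rule distr_PiM_component) (auto intro: prob_space_gauss)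
    finally show ?thesis
      unfolding distributed_def by (auto simp: gauss_def \<Omega>_def intro!: measurable_component_singleton)
  qed
  have "distributed \<Omega> lborel (\<lambda>a. \<Sum>i\<in>J. x i * a i)
           (normal_density (\<Sum>i\<in>J. 0) (sqrt (\<Sum>i\<in>J. \<bar>x i\<bar>^2)))"
  proof (rule sum_indep_normal)
    show "distributed \<Omega> lborel (\<lambda>a. x i * a i) (normal_density 0 \<bar>x i\<bar>)" if "i \<in> J" for i
      using normal_density_affine[OF std_normal[of i], of "x i" 0] that by (simp add: J_def)
  qed (use \<open>J \<noteq> {}\<close> indep in \<open>auto simp: J_def\<close>)
  moreover have "(\<Sum>i\<in>J. \<bar>x i\<bar>^2) = 1"
    using x_unit sum.mono_neutral_left[of UNIV J "\<lambda>i. (x i)^2"] by (simp add: J_def)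
  moreover have "(\<lambda>a. \<Sum>i\<in>J. x i * a i) = (\<lambda>a. \<Sum>i\<in>UNIV. a i * x i)"
  proof
    fix a :: "'n \<Rightarrow> real"
    have "(\<Sum>i\<in>J. x i * a i) = (\<Sum>i\<in>UNIV. x i * a i)"
      by (rule sum.mono_neutral_left) (auto simp: J_def)
    then show "(\<Sum>i\<in>J. x i * a i) = (\<Sum>i\<in>UNIV. a i * x i)"
      by (simp add: mult.commute)
  qed
  ultimately show ?thesis
    unfolding \<Omega>_def by simp
qed

lemma integral_abs_inner_PiM_gauss:
  fixes x :: "'n::finite \<Rightarrow> real"
  assumes "(\<Sum>i\<in>UNIV. (x i)^2) = 1"
  shows "(\<integral>a. \<bar>\<Sum>i\<in>UNIV. a i * x i\<bar> \<partial>PiM UNIV (\<lambda>_. gauss)) = sqrt (2 / pi)"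
proof -
  have "(\<integral>a. \<bar>\<Sum>i\<in>UNIV. a i * x i\<bar> \<partial>PiM UNIV (\<lambda>_. gauss)) = (\<integral>y. std_normal_density y * \<bar>y\<bar> \<partial>lborel)"
    using distributed_integral[OF distributed_inner_PiM_gauss[OF assms], of abs] by simp
  also have "\<dots> = sqrt (2 / pi)"
    using integral_std_normal_moment_abs_odd[of 0] by simp
  finally show ?thesis .
qed

lemma
  fixes h :: "'a \<Rightarrow> real"
  assumes "prob_space M" and "h \<in> borel_measurable M"
  shows integrable_PiM_component_iff:
      "integrable (PiM (UNIV :: 'n set) (\<lambda>_. M)) (\<lambda>\<omega>. h (\<omega> i)) \<longleftrightarrow> integrable M h"
    and integral_PiM_component:
      "(\<integral>\<omega>. h (\<omega> i) \<partial>PiM (UNIV :: 'n set) (\<lambda>_. M)) = (\<integral>p. h p \<partial>M)"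
proof -
  have comp_meas: "(\<lambda>\<omega>. \<omega> i) \<in> measurable (PiM (UNIV :: 'n set) (\<lambda>_. M)) M"
    by (rule measurable_component_singleton) simp
  have "distr (PiM (UNIV :: 'n set) (\<lambda>_. M)) M (\<lambda>\<omega>. \<omega> i) = M"
    by (rule distr_PiM_component) (use assms(1) in auto)
  then show "integrable (PiM (UNIV :: 'n set) (\<lambda>_. M)) (\<lambda>\<omega>. h (\<omega> i)) \<longleftrightarrow> integrable M h"
    "(\<integral>\<omega>. h (\<omega> i) \<partial>PiM (UNIV :: 'n set) (\<lambda>_. M)) = (\<integral>p. h p \<partial>M)"
    using integrable_distr_eq[OF comp_meas assms(2)] integral_distr[OF comp_meas assms(2)] by simp_all
qed

lemma integral_PiM_two_components:
  fixes g h :: "'a \<Rightarrow> real"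
  assumes "prob_space M" and "integrable M g" and "integrable M h" and "i \<noteq> j"
  shows "(\<integral>\<omega>. g (\<omega> i) * h (\<omega> j) \<partial>PiM (UNIV :: 'n::finite set) (\<lambda>_. M)) = (\<integral>p. g p \<partial>M) * (\<integral>p. h p \<partial>M)"
proof -
  interpret product_prob_space "\<lambda>_::'n. M" by (rule product_prob_spaceI) (rule assms(1))
  define f where "f = (\<lambda>k. if k = i then g else if k = j then h else (\<lambda>_. 1))"
  have "(\<lambda>\<omega>. g (\<omega> i) * h (\<omega> j)) = (\<lambda>\<omega>. \<Prod>k\<in>UNIV. f k (\<omega> k))"
  proof
    fix \<omega> :: "'n \<Rightarrow> 'a"
    have "(\<Prod>k\<in>UNIV. f k (\<omega> k)) = (\<Prod>k\<in>{i, j}. f k (\<omega> k))"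
      by (rule prod.mono_neutral_right) (auto simp: f_def)
    with assms(4) show "g (\<omega> i) * h (\<omega> j) = (\<Prod>k\<in>UNIV. f k (\<omega> k))" by (simp add: f_def)
  qed
  moreover have "(\<integral>\<omega>. (\<Prod>k\<in>UNIV. f k (\<omega> k)) \<partial>PiM UNIV (\<lambda>_. M)) = (\<Prod>k\<in>UNIV. (\<integral>p. f k p \<partial>M))"
    by (rule product_integral_prod) (auto simp: f_def assms(2,3))
  moreover have "(\<Prod>k\<in>UNIV. (\<integral>p. f k p \<partial>M)) = (\<Prod>k\<in>{i, j}. (\<integral>p. f k p \<partial>M))"
    by (rule prod.mono_neutral_right) (auto simp: f_def prob_space.prob_space[OF assms(1)])
  ultimately show ?thesis
    using assms(4) by (simp add: f_def)
qed

lemma integral_PiM_weighted_sum_square: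
  fixes g :: "'a \<Rightarrow> real" and x :: "'n::finite \<Rightarrow> real"
  assumes "prob_space M" and [measurable]: "g \<in> borel_measurable M"
    and "integrable M (\<lambda>p. g p^2)" and "(\<integral>p. g p \<partial>M) = 0"
  defines "Z \<equiv> \<lambda>\<omega>. \<Sum>i\<in>UNIV. x i * g (\<omega> i)"
  shows "integrable (PiM UNIV (\<lambda>_. M)) (\<lambda>\<omega>. (Z \<omega>)^2)"
    and "(\<integral>\<omega>. (Z \<omega>)^2 \<partial>PiM UNIV (\<lambda>_. M)) = (\<Sum>i\<in>UNIV. (x i)^2) * (\<integral>p. g p^2 \<partial>M)"
proof -
  interpret M: prob_space M by fact
  define \<Omega> where "\<Omega> = PiM (UNIV :: 'n set) (\<lambda>_. M)"
  have g_int: "integrable M g"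
    by (rule M.square_integrable_imp_integrable) (use assms(3) in auto)
  have square_int: "integrable \<Omega> (\<lambda>\<omega>. g (\<omega> i)^2)" for i
    unfolding \<Omega>_def by (rule integrable_PiM_component_iff[OF assms(1), THEN iffD2]) (use assms(3) in simp_all)
  have prod_int: "integrable \<Omega> (\<lambda>\<omega>. g (\<omega> i) * g (\<omega> j))" for i j
  proof (rule Bochner_Integration.integrable_bound)
    show "integrable \<Omega> (\<lambda>\<omega>. g (\<omega> i)^2 + g (\<omega> j)^2)"
      using square_int by simp
    show "AE \<omega> in \<Omega>. norm (g (\<omega> i) * g (\<omega> j)) \<le> norm (g (\<omega> i)^2 + g (\<omega> j)^2)"
      using abs_mult_le_sum_squares by auto
  qed (unfold \<Omega>_def, measurable)
  have prod_integral: "(\<integral>\<omega>. g (\<omega> i) * g (\<omega> j) \<partial>\<Omega>) = (if i = j then \<integral>p. g p^2 \<partial>M else 0)" for i j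
    using integral_PiM_component[OF assms(1), of "\<lambda>p. g p^2" i]
      integral_PiM_two_components[OF assms(1) g_int g_int, of i j] assms(4)
    unfolding \<Omega>_def by (auto simp: power2_eq_square)
  have Z_sq: "(\<lambda>\<omega>. (Z \<omega>)^2) = (\<lambda>\<omega>. \<Sum>i\<in>UNIV. \<Sum>j\<in>UNIV. x i * x j * (g (\<omega> i) * g (\<omega> j)))"
    by (auto simp: Z_def power2_eq_square sum_product fun_eq_iff mult_ac intro!: sum.cong)
  show "integrable (PiM UNIV (\<lambda>_. M)) (\<lambda>\<omega>. (Z \<omega>)^2)"
    unfolding Z_sq \<Omega>_def[symmetric] using prod_int by auto
  have "(\<integral>\<omega>. (Z \<omega>)^2 \<partial>\<Omega>) = (\<Sum>i\<in>UNIV. \<Sum>j\<in>UNIV. x i * x j * (\<integral>\<omega>. g (\<omega> i) * g (\<omega> j) \<partial>\<Omega>))"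
    unfolding Z_sq using prod_int by (simp add: integral_sum)
  also have "\<dots> = (\<Sum>i\<in>UNIV. (x i)^2) * (\<integral>p. g p^2 \<partial>M)"
    by (simp add: prod_integral power2_eq_square if_distrib sum_distrib_right cong: if_cong)
  finally show "(\<integral>\<omega>. (Z \<omega>)^2 \<partial>PiM UNIV (\<lambda>_. M)) = (\<Sum>i\<in>UNIV. (x i)^2) * (\<integral>p. g p^2 \<partial>M)"
    unfolding \<Omega>_def .
qed

lemma integral_PiM_image_components:
  fixes h :: "'a \<Rightarrow> 'b" and F :: "('n::finite \<Rightarrow> 'b) \<Rightarrow> real"
  assumes "prob_space M" and "prob_space N" and h_meas [measurable]: "h \<in> measurable M N"
    and "distr M N h = N" and F_meas: "F \<in> borel_measurable (PiM UNIV (\<lambda>_. N))"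
  shows "(\<integral>b. F b \<partial>PiM UNIV (\<lambda>_. N)) = (\<integral>a. F (\<lambda>i. h (a i)) \<partial>PiM UNIV (\<lambda>_. M))"
proof -
  have "distr (PiM UNIV (\<lambda>_. M)) (PiM UNIV (\<lambda>_. N)) (compose (UNIV :: 'n set) h) = PiM UNIV (\<lambda>_. distr M N h)"
    by (rule distr_PiM_finite_prob_space') (use assms in auto)
  then have image: "distr (PiM UNIV (\<lambda>_. M)) (PiM UNIV (\<lambda>_. N)) (compose (UNIV :: 'n set) h) = PiM UNIV (\<lambda>_. N)"
    by (simp add: assms(4))
  have "compose (UNIV :: 'n set) h \<in> measurable (PiM UNIV (\<lambda>_. M)) (PiM UNIV (\<lambda>_. N))"
    unfolding compose_def by measurable
  from integral_distr[OF this F_meas] show ?thesis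
    unfolding image by (simp add: compose_def restrict_UNIV)
qed

text \<open>The sum of two measures, as a mixture over \<open>bool\<close>; it is only meaningful for subprobability
  measures on the same \<open>\<sigma>\<close>-algebra.\<close>
definition measure_add :: "'a measure \<Rightarrow> 'a measure \<Rightarrow> 'a measure" where
  "measure_add M N = bind (count_space UNIV) (\<lambda>b. if b then M else N)"

lemma
  assumes "subprob_space M" and "subprob_space N" and "sets N = sets M"
  shows sets_measure_add: "sets (measure_add M N) = sets M"
    and emeasure_measure_add: "A \<in> sets M \<Longrightarrow> emeasure (measure_add M N) A = emeasure M A + emeasure N A"
proof -
  have K: "(\<lambda>b. if b then M else N) \<in> measurable (count_space UNIV) (subprob_algebra M)"
    using assms by (auto simp: space_subprob_algebra)
  show "sets (measure_add M N) = sets M"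
    unfolding measure_add_def by (rule sets_bind) (use assms in auto)
  show "emeasure (measure_add M N) A = emeasure M A + emeasure N A" if "A \<in> sets M"
    unfolding measure_add_def using that K
    by (subst emeasure_bind[where N=M]) (auto simp: nn_integral_count_space_finite UNIV_bool)
qed

lemma distr_measure_add:
  assumes M: "subprob_space M" and N: "subprob_space N" and sets_N: "sets N = sets M"
    and g_meas: "g \<in> measurable M K"
  shows "distr (measure_add M N) K g = measure_add (distr M K g) (distr N K g)"
proof (rule measure_eqI)
  have sets_add: "sets (measure_add M N) = sets M"
    using M N sets_N by (rule sets_measure_add)
  have g_meas_N: "g \<in> measurable N K"
    using g_meas by (subst measurable_cong_sets[OF sets_N refl])
  have g_meas_add: "g \<in> measurable (measure_add M N) K"
    using g_meas by (subst measurable_cong_sets[OF sets_add refl])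
  have "space K \<noteq> {}"
    using measurable_space[OF g_meas] subprob_space.subprob_not_empty[OF M] by blast
  then have sub: "subprob_space (distr M K g)" "subprob_space (distr N K g)"
    using subprob_space.subprob_space_distr[OF M g_meas] subprob_space.subprob_space_distr[OF N g_meas_N]
    by auto
  then show "sets (distr (measure_add M N) K g) = sets (measure_add (distr M K g) (distr N K g))"
    by (simp add: sets_measure_add)
  fix A assume "A \<in> sets (distr (measure_add M N) K g)"
  then have A: "A \<in> sets K" by simp
  have space_eq: "space (measure_add M N) = space M" "space N = space M"
    using sets_eq_imp_space_eq[OF sets_add] sets_eq_imp_space_eq[OF sets_N] by simp_all
  have "emeasure (distr (measure_add M N) K g) A = emeasure (measure_add M N) (g -` A \<inter> space M)"
    using emeasure_distr[OF g_meas_add A] by (simp add: space_eq)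
  also have "\<dots> = emeasure M (g -` A \<inter> space M) + emeasure N (g -` A \<inter> space N)"
    using emeasure_measure_add[OF M N sets_N] measurable_sets[OF g_meas A] by (simp add: space_eq)
  also have "\<dots> = emeasure (measure_add (distr M K g) (distr N K g)) A"
    using emeasure_measure_add[OF sub] A g_meas g_meas_N by (simp add: emeasure_distr)
  finally show "emeasure (distr (measure_add M N) K g) A = emeasure (measure_add (distr M K g) (distr N K g)) A" .
qed

lemma density_add_eq_measure_add:
  assumes [measurable]: "u \<in> borel_measurable M" "v \<in> borel_measurable M"
    and "subprob_space (density M u)" "subprob_space (density M v)"
  shows "density M (\<lambda>x. u x + v x) = measure_add (density M u) (density M v)"
proof (rule measure_eqI)
  show "sets (density M (\<lambda>x. u x + v x)) = sets (measure_add (density M u) (density M v))"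
    using assms(3,4) by (simp add: sets_measure_add)
  fix A assume "A \<in> sets (density M (\<lambda>x. u x + v x))"
  then have [measurable]: "A \<in> sets M" by simp
  have "emeasure (density M (\<lambda>x. u x + v x)) A = (\<integral>\<^sup>+x. u x * indicator A x + v x * indicator A x \<partial>M)"
    by (simp add: emeasure_density distrib_right)
  also have "\<dots> = emeasure (density M u) A + emeasure (density M v) A"
    by (simp add: nn_integral_add emeasure_density)
  also have "\<dots> = emeasure (measure_add (density M u) (density M v)) A"
    using assms(3,4) by (simp add: emeasure_measure_add)
  finally show "emeasure (density M (\<lambda>x. u x + v x)) A = emeasure (measure_add (density M u) (density M v)) A" .
qed

lemma ennreal_one_divide_mult_cancel:
  fixes a D :: ennreal
  assumes "a \<le> D" and "D \<noteq> \<top>"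
  shows "1 / D * (a * D) = a"
proof (cases "D = 0")
  case True
  with assms(1) show ?thesis by simp
next
  case False
  with assms(2) show ?thesis
    using mult_divide_eq_ennreal[of D a] by (simp add: ennreal_times_divide mult.commute)
qed

lemma scaled_pair_measure_marginals:
  assumes "subprob_space M" and "subprob_space N" and mass: "emeasure M (space M) = emeasure N (space N)"
  defines "Q \<equiv> scale_measure (1 / emeasure N (space N)) (M \<Otimes>\<^sub>M N)"
  shows "distr Q M fst = M" and "distr Q N snd = N" and "emeasure Q (space Q) = emeasure N (space N)"
    and "subprob_space Q"
proof -
  interpret M: subprob_space M by fact
  interpret N: subprob_space N by fact
  define D where "D = emeasure N (space N)"
  have "D \<noteq> \<top>" unfolding D_def by simp
  have cancel: "1 / D * (a * D) = a" if "a \<le> D" for a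
    using that \<open>D \<noteq> \<top>\<close> by (rule ennreal_one_divide_mult_cancel)
  have Q_times: "emeasure Q (A \<times> B) = 1 / D * (emeasure M A * emeasure N B)"
    if "A \<in> sets M" "B \<in> sets N" for A B
    using that by (simp add: Q_def D_def N.emeasure_pair_measure_Times)
  have space_Q: "space Q = space M \<times> space N"
    by (simp add: Q_def space_scale_measure space_pair_measure)
  show "distr Q M fst = M"
  proof (rule measure_eqI)
    fix A assume "A \<in> sets (distr Q M fst)"
    then have A: "A \<in> sets M" by simp
    have "emeasure (distr Q M fst) A = emeasure Q (fst -` A \<inter> space Q)"
      by (rule emeasure_distr[OF _ A]) (simp add: Q_def)
    also have "fst -` A \<inter> space Q = A \<times> space N"
      using sets.sets_into_space[OF A] by (auto simp: space_Q)
    also have "emeasure Q (A \<times> space N) = emeasure M A"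
      using A Q_times[OF A sets.top[of N]] cancel[of "emeasure M A"] emeasure_space[of M A] mass
      by (simp add: D_def mult.commute)
    finally show "emeasure (distr Q M fst) A = emeasure M A" .
  qed simp
  show "distr Q N snd = N"
  proof (rule measure_eqI)
    fix B assume "B \<in> sets (distr Q N snd)"
    then have B: "B \<in> sets N" by simp
    have "emeasure (distr Q N snd) B = emeasure Q (snd -` B \<inter> space Q)"
      by (rule emeasure_distr[OF _ B]) (simp add: Q_def)
    also have "snd -` B \<inter> space Q = space M \<times> B"
      using sets.sets_into_space[OF B] by (auto simp: space_Q)
    also have "emeasure Q (space M \<times> B) = emeasure N B"
      using B Q_times[OF sets.top[of M] B] cancel[of "emeasure N B"] emeasure_space[of N B] mass
      by (simp add: D_def mult.commute)
    finally show "emeasure (distr Q N snd) B = emeasure N B" .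
  qed simp
  show mass_Q: "emeasure Q (space Q) = D"
    using Q_times[OF sets.top[of M] sets.top[of N]] cancel[of D] mass by (simp add: space_Q D_def)
  show "subprob_space Q"
    using mass_Q N.subprob_emeasure_le_1 M.subprob_not_empty N.subprob_not_empty
    by (intro subprob_spaceI) (simp_all add: D_def space_Q)
qed

lemma abs_measure_diff_le_tv_dist:
  assumes "prob_space \<mu>" and "prob_space \<gamma>" and "B \<in> sets borel"
  shows "\<bar>measure \<mu> B - measure \<gamma> B\<bar> \<le> tv_dist \<mu> \<gamma>"
  unfolding tv_dist_def
proof (rule cSUP_upper)
  have "\<bar>measure \<mu> A - measure \<gamma> A\<bar> \<le> 1" for A
    using prob_space.prob_le_1[OF assms(1), of A] prob_space.prob_le_1[OF assms(2), of A]
      measure_nonneg[of \<mu> A] measure_nonneg[of \<gamma> A] by linarith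
  then show "bdd_above ((\<lambda>A. \<bar>measure \<mu> A - measure \<gamma> A\<bar>) ` sets borel)"
    by (intro bdd_aboveI) auto
qed fact

lemma exists_common_density:
  assumes "prob_space \<mu>" and "prob_space \<gamma>" and sets_\<gamma>: "sets \<gamma> = sets \<mu>"
  obtains \<nu> f h where "finite_measure \<nu>" and "sets \<nu> = sets \<mu>"
    and "f \<in> borel_measurable \<nu>" and "h \<in> borel_measurable \<nu>"
    and "density \<nu> f = \<mu>" and "density \<nu> h = \<gamma>"
proof -
  have sub: "subprob_space \<mu>" "subprob_space \<gamma>"
    using assms by (simp_all add: prob_space_imp_subprob_space)
  define \<nu> where "\<nu> = measure_add \<mu> \<gamma>"
  have sets_\<nu>: "sets \<nu> = sets \<mu>"
    unfolding \<nu>_def using sub sets_\<gamma> by (rule sets_measure_add)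
  have emeasure_\<nu>: "emeasure \<nu> A = emeasure \<mu> A + emeasure \<gamma> A" if "A \<in> sets \<mu>" for A
    unfolding \<nu>_def using sub sets_\<gamma> that by (rule emeasure_measure_add)
  interpret \<nu>: finite_measure \<nu>
  proof
    have "emeasure \<nu> (space \<nu>) = emeasure \<mu> (space \<mu>) + emeasure \<gamma> (space \<gamma>)"
      using emeasure_\<nu>[OF sets.top] sets_eq_imp_space_eq[OF sets_\<nu>] sets_eq_imp_space_eq[OF sets_\<gamma>]
      by simp
    then show "emeasure \<nu> (space \<nu>) \<noteq> \<infinity>"
      using prob_space.emeasure_space_1[OF assms(1)] prob_space.emeasure_space_1[OF assms(2)] by simp
  qed
  have "absolutely_continuous \<nu> \<mu>" "absolutely_continuous \<nu> \<gamma>"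
    unfolding absolutely_continuous_def null_sets_def using sets_\<nu> sets_\<gamma> emeasure_\<nu> by auto
  then have "density \<nu> (RN_deriv \<nu> \<mu>) = \<mu>" "density \<nu> (RN_deriv \<nu> \<gamma>) = \<gamma>"
    using sets_\<nu> sets_\<gamma> by (simp_all add: \<nu>.density_RN_deriv)
  then show ?thesis
    by (rule that[OF \<nu>.finite_measure_axioms sets_\<nu> borel_measurable_RN_deriv borel_measurable_RN_deriv])
qed

lemma density_split_below:
  assumes [measurable]: "f \<in> borel_measurable M" "u \<in> borel_measurable M"
    and u_le: "\<And>x. u x \<le> f x" and prob: "prob_space (density M f)"
  shows "subprob_space (density M u)" and "subprob_space (density M (\<lambda>x. f x - u x))"
    and "emeasure (density M u) (space M) + emeasure (density M (\<lambda>x. f x - u x)) (space M) = 1"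
    and "density M f = measure_add (density M u) (density M (\<lambda>x. f x - u x))"
proof -
  have f_eq: "f = (\<lambda>x. u x + (f x - u x))"
    by (simp add: fun_eq_iff add_diff_inverse_ennreal u_le)
  have "space M \<noteq> {}"
    using prob_space.not_empty[OF prob] by simp
  show total: "emeasure (density M u) (space M) + emeasure (density M (\<lambda>x. f x - u x)) (space M) = 1"
    using emeasure_density_add[of "space M" M u "\<lambda>x. f x - u x"] prob_space.emeasure_space_1[OF prob]
    by (simp flip: f_eq)
  then have "emeasure (density M u) (space M) \<le> 1" "emeasure (density M (\<lambda>x. f x - u x)) (space M) \<le> 1"
    by (metis add.commute le_iff_add)+
  then show sub: "subprob_space (density M u)" "subprob_space (density M (\<lambda>x. f x - u x))"
    using \<open>space M \<noteq> {}\<close> by (auto intro!: subprob_spaceI)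
  show "density M f = measure_add (density M u) (density M (\<lambda>x. f x - u x))"
    by (subst f_eq) (rule density_add_eq_measure_add; use sub in simp)
qed

lemma diagonal_measure:
  fixes M :: "'a measure"
  defines "\<Delta> \<equiv> distr M (M \<Otimes>\<^sub>M M) (\<lambda>t. (t, t))"
  shows "distr \<Delta> M fst = M" and "distr \<Delta> M snd = M" and "emeasure \<Delta> {p. fst p \<noteq> snd p} = 0"
proof -
  have diag [measurable]: "(\<lambda>t. (t, t)) \<in> measurable M (M \<Otimes>\<^sub>M M)" by measurable
  show "distr \<Delta> M fst = M" "distr \<Delta> M snd = M"
    unfolding \<Delta>_def by (simp_all add: distr_distr comp_def)
  show "emeasure \<Delta> {p. fst p \<noteq> snd p} = 0"
  proof (cases "{p. fst p \<noteq> snd p} \<in> sets \<Delta>")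
    case True
    then show ?thesis
      unfolding \<Delta>_def by (subst emeasure_distr) (auto simp: vimage_def)
  qed (simp add: emeasure_notin_sets)
qed

lemma exists_coupling_of_common_part:
  fixes \<alpha> \<beta>\<^sub>1 \<beta>\<^sub>2 :: "real measure"
  assumes "subprob_space \<alpha>" and "subprob_space \<beta>\<^sub>1" and "subprob_space \<beta>\<^sub>2"
    and sets_parts: "sets \<alpha> = sets borel" "sets \<beta>\<^sub>1 = sets borel" "sets \<beta>\<^sub>2 = sets borel"
    and mass: "emeasure \<beta>\<^sub>1 (space \<beta>\<^sub>1) = emeasure \<beta>\<^sub>2 (space \<beta>\<^sub>2)"
  obtains P where "sets P = sets (borel \<Otimes>\<^sub>M borel)"
    and "distr P borel fst = measure_add \<alpha> \<beta>\<^sub>1" and "distr P borel snd = measure_add \<alpha> \<beta>\<^sub>2"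
    and "emeasure P {p. fst p \<noteq> snd p} \<le> emeasure \<beta>\<^sub>1 (space \<beta>\<^sub>1)"
proof -
  interpret \<alpha>: subprob_space \<alpha> by fact
  \<comment> \<open>\<open>\<alpha>\<close> is put on the diagonal, the residual parts are coupled independently\<close>
  define Q\<^sub>1 where "Q\<^sub>1 = scale_measure (1 / emeasure \<beta>\<^sub>2 (space \<beta>\<^sub>2)) (\<beta>\<^sub>1 \<Otimes>\<^sub>M \<beta>\<^sub>2)"
  define Q\<^sub>2 where "Q\<^sub>2 = distr \<alpha> (\<alpha> \<Otimes>\<^sub>M \<alpha>) (\<lambda>t. (t, t))"
  note Q\<^sub>1_marginals = scaled_pair_measure_marginals[OF assms(2,3) mass, folded Q\<^sub>1_def]
  have sets_Q: "sets Q\<^sub>1 = sets (borel \<Otimes>\<^sub>M borel)" "sets Q\<^sub>2 = sets (borel \<Otimes>\<^sub>M borel)"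
    using sets_pair_measure_cong[OF sets_parts(2,3)] sets_pair_measure_cong[OF sets_parts(1,1)]
    by (simp_all add: Q\<^sub>1_def Q\<^sub>2_def)
  have "subprob_space Q\<^sub>2"
    unfolding Q\<^sub>2_def by (rule \<alpha>.subprob_space_distr) (simp_all add: space_pair_measure \<alpha>.subprob_not_empty)
  note sub_Q = this Q\<^sub>1_marginals(4)
  define P where "P = measure_add Q\<^sub>2 Q\<^sub>1"
  have sets_P: "sets P = sets (borel \<Otimes>\<^sub>M borel)"
    unfolding P_def using sub_Q sets_Q by (simp add: sets_measure_add)
  have marginal: "distr P borel g = measure_add (distr Q\<^sub>2 borel g) (distr Q\<^sub>1 borel g)"
    if "g \<in> measurable (borel \<Otimes>\<^sub>M borel) borel" for g
  proof -
    have "g \<in> measurable Q\<^sub>2 borel"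
      using that by (subst measurable_cong_sets[OF sets_Q(2) refl])
    moreover have "sets Q\<^sub>1 = sets Q\<^sub>2" using sets_Q by simp
    ultimately show ?thesis
      unfolding P_def using sub_Q by (intro distr_measure_add)
  qed
  have "distr Q\<^sub>2 borel fst = \<alpha>" "distr Q\<^sub>1 borel fst = \<beta>\<^sub>1"
    "distr Q\<^sub>2 borel snd = \<alpha>" "distr Q\<^sub>1 borel snd = \<beta>\<^sub>2"
    using diagonal_measure(1,2)[of \<alpha>] Q\<^sub>1_marginals(1,2) sets_parts
    by (simp_all add: Q\<^sub>2_def cong: distr_cong)
  then have "distr P borel fst = measure_add \<alpha> \<beta>\<^sub>1" "distr P borel snd = measure_add \<alpha> \<beta>\<^sub>2"
    using marginal[of fst] marginal[of snd] by simp_all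
  moreover have "emeasure P {p. fst p \<noteq> snd p} \<le> emeasure \<beta>\<^sub>1 (space \<beta>\<^sub>1)"
  proof -
    have "{p \<in> space (borel \<Otimes>\<^sub>M borel). fst p \<noteq> (snd p :: real)} \<in> sets (borel \<Otimes>\<^sub>M borel)"
      by measurable
    then have "emeasure P {p. fst p \<noteq> snd p} = emeasure Q\<^sub>1 {p. fst p \<noteq> snd p}"
      using emeasure_measure_add[OF sub_Q] sets_Q diagonal_measure(3)[of \<alpha>]
      by (simp add: P_def Q\<^sub>2_def space_pair_measure)
    also have "\<dots> \<le> emeasure Q\<^sub>1 (space Q\<^sub>1)"
      by (rule emeasure_space)
    finally show ?thesis
      using Q\<^sub>1_marginals(3) mass by simp
  qed
  ultimately show ?thesis using that sets_P by blast
qed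

lemma exists_coupling_of_densities:
  fixes \<nu> :: "real measure"
  assumes sets_\<nu>: "sets \<nu> = sets borel"
    and f_meas [measurable]: "f \<in> borel_measurable \<nu>" and h_meas [measurable]: "h \<in> borel_measurable \<nu>"
    and prob_f: "prob_space (density \<nu> f)" and prob_h: "prob_space (density \<nu> h)"
  obtains P where "sets P = sets (borel \<Otimes>\<^sub>M borel)"
    and "distr P borel fst = density \<nu> f" and "distr P borel snd = density \<nu> h"
    and "emeasure P {p. fst p \<noteq> snd p} \<le> (\<integral>\<^sup>+x. f x - min (f x) (h x) \<partial>\<nu>)"
proof -
  define m where "m = (\<lambda>x. min (f x) (h x))"
  have m_meas [measurable]: "m \<in> borel_measurable \<nu>" unfolding m_def by measurable
  define \<alpha> where "\<alpha> = density \<nu> m"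
  define \<beta>\<^sub>1 where "\<beta>\<^sub>1 = density \<nu> (\<lambda>x. f x - m x)"
  define \<beta>\<^sub>2 where "\<beta>\<^sub>2 = density \<nu> (\<lambda>x. h x - m x)"
  have split_f: "subprob_space \<alpha>" "subprob_space \<beta>\<^sub>1" "emeasure \<alpha> (space \<nu>) + emeasure \<beta>\<^sub>1 (space \<nu>) = 1"
      "density \<nu> f = measure_add \<alpha> \<beta>\<^sub>1"
    using density_split_below[OF f_meas m_meas _ prob_f] unfolding \<alpha>_def \<beta>\<^sub>1_def by (auto simp: m_def)
  have split_h: "subprob_space \<beta>\<^sub>2" "emeasure \<alpha> (space \<nu>) + emeasure \<beta>\<^sub>2 (space \<nu>) = 1"
      "density \<nu> h = measure_add \<alpha> \<beta>\<^sub>2"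
    using density_split_below[OF h_meas m_meas _ prob_h] unfolding \<alpha>_def \<beta>\<^sub>2_def by (auto simp: m_def)
  have space_parts: "space \<alpha> = space \<nu>" "space \<beta>\<^sub>1 = space \<nu>" "space \<beta>\<^sub>2 = space \<nu>"
    by (simp_all add: \<alpha>_def \<beta>\<^sub>1_def \<beta>\<^sub>2_def)
  have "emeasure \<alpha> (space \<nu>) + emeasure \<beta>\<^sub>1 (space \<nu>) = emeasure \<alpha> (space \<nu>) + emeasure \<beta>\<^sub>2 (space \<nu>)"
    using split_f(3) split_h(2) by simp
  then have mass: "emeasure \<beta>\<^sub>1 (space \<beta>\<^sub>1) = emeasure \<beta>\<^sub>2 (space \<beta>\<^sub>2)"
    using finite_measure.emeasure_finite[OF subprob_space.axioms(1)[OF split_f(1)], of "space \<nu>"]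
    by (simp add: ennreal_add_left_cancel space_parts)
  have "sets \<alpha> = sets borel" "sets \<beta>\<^sub>1 = sets borel" "sets \<beta>\<^sub>2 = sets borel"
    by (simp_all add: \<alpha>_def \<beta>\<^sub>1_def \<beta>\<^sub>2_def sets_\<nu>)
  then obtain P where "sets P = sets (borel \<Otimes>\<^sub>M borel)"
    and "distr P borel fst = measure_add \<alpha> \<beta>\<^sub>1" and "distr P borel snd = measure_add \<alpha> \<beta>\<^sub>2"
    and "emeasure P {p. fst p \<noteq> snd p} \<le> emeasure \<beta>\<^sub>1 (space \<beta>\<^sub>1)"
    by (rule exists_coupling_of_common_part[OF split_f(1,2) split_h(1) _ _ _ mass])
  moreover have "emeasure \<beta>\<^sub>1 (space \<beta>\<^sub>1) = (\<integral>\<^sup>+x. f x - min (f x) (h x) \<partial>\<nu>)"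
    unfolding \<beta>\<^sub>1_def m_def by (subst emeasure_density) (auto intro!: nn_integral_cong)
  ultimately show ?thesis
    using that unfolding split_f(4) split_h(3) by simp
qed

lemma emeasure_density_excess:
  assumes [measurable]: "f \<in> borel_measurable M" "h \<in> borel_measurable M"
    and finite: "(\<integral>\<^sup>+x. f x \<partial>M) \<noteq> \<infinity>"
  defines "B \<equiv> {x \<in> space M. h x < f x}"
  shows "emeasure (density M f) B = emeasure (density M h) B + (\<integral>\<^sup>+x. f x - min (f x) (h x) \<partial>M)"
proof -
  have [measurable]: "B \<in> sets M" unfolding B_def by measurable
  have "AE x in M. f x \<noteq> \<infinity>"
    using nn_integral_PInf_AE[OF _ finite] by simp
  with AE_space have "AE x in M. f x - min (f x) (h x) = (f x - h x) * indicator B x"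
    by eventually_elim (auto simp: B_def indicator_def min_def)
  then have excess: "(\<integral>\<^sup>+x. f x - min (f x) (h x) \<partial>M) = (\<integral>\<^sup>+x. (f x - h x) * indicator B x \<partial>M)"
    by (rule nn_integral_cong_AE)
  have "emeasure (density M f) B = (\<integral>\<^sup>+x. f x * indicator B x \<partial>M)"
    by (simp add: emeasure_density)
  also have "\<dots> = (\<integral>\<^sup>+x. h x * indicator B x + (f x - h x) * indicator B x \<partial>M)"
    by (intro nn_integral_cong) (simp add: B_def indicator_def add_diff_inverse_ennreal less_imp_le)
  also have "\<dots> = emeasure (density M h) B + (\<integral>\<^sup>+x. f x - min (f x) (h x) \<partial>M)"
    by (subst nn_integral_add) (simp_all add: emeasure_density excess)
  finally show ?thesis .
qed

lemma overlap_defect_le_tv_dist: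
  fixes \<nu> :: "real measure"
  assumes sets_\<nu>: "sets \<nu> = sets borel"
    and [measurable]: "f \<in> borel_measurable \<nu>" "h \<in> borel_measurable \<nu>"
    and prob_f: "prob_space (density \<nu> f)" and prob_h: "prob_space (density \<nu> h)"
  defines "D \<equiv> \<integral>\<^sup>+x. f x - min (f x) (h x) \<partial>\<nu>"
  shows "D \<noteq> \<infinity>" and "enn2real D \<le> tv_dist (density \<nu> f) (density \<nu> h)"
proof -
  define B where "B = {x \<in> space \<nu>. h x < f x}"
  have "B \<in> sets borel"
    unfolding B_def sets_\<nu>[symmetric] by measurable
  have "(\<integral>\<^sup>+x. f x \<partial>\<nu>) = 1"
    using prob_space.emeasure_space_1[OF prob_f] by (simp add: emeasure_density)
  then have excess: "emeasure (density \<nu> f) B = emeasure (density \<nu> h) B + D"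
    using emeasure_density_excess[of f \<nu> h] unfolding B_def D_def by simp
  have finite: "emeasure (density \<nu> f) B \<noteq> \<infinity>" "emeasure (density \<nu> h) B \<noteq> \<infinity>"
    using finite_measure.emeasure_finite[OF prob_space.finite_measure[OF prob_f]]
      finite_measure.emeasure_finite[OF prob_space.finite_measure[OF prob_h]] by auto
  with excess show "D \<noteq> \<infinity>" by auto
  with excess finite have "enn2real D = measure (density \<nu> f) B - measure (density \<nu> h) B"
    by (simp add: measure_def enn2real_plus less_top)
  also have "\<dots> \<le> tv_dist (density \<nu> f) (density \<nu> h)"
    using abs_measure_diff_le_tv_dist[OF prob_f prob_h \<open>B \<in> sets borel\<close>] by linarith
  finally show "enn2real D \<le> tv_dist (density \<nu> f) (density \<nu> h)" .
qed

lemma exists_coupling_tv_dist: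
  fixes \<mu> \<gamma> :: "real measure"
  assumes prob_\<mu>: "prob_space \<mu>" and prob_\<gamma>: "prob_space \<gamma>"
    and sets_\<mu>: "sets \<mu> = sets borel" and sets_\<gamma>: "sets \<gamma> = sets borel"
  obtains P where "prob_space P" and "sets P = sets (borel \<Otimes>\<^sub>M borel)"
    and "distr P borel fst = \<mu>" and "distr P borel snd = \<gamma>"
    and "measure P {p. fst p \<noteq> snd p} \<le> tv_dist \<mu> \<gamma>"
proof -
  have "sets \<gamma> = sets \<mu>" using sets_\<mu> sets_\<gamma> by simp
  then obtain \<nu> f h where "sets \<nu> = sets \<mu>"
    and f_meas: "f \<in> borel_measurable \<nu>" and h_meas: "h \<in> borel_measurable \<nu>"
    and \<mu>_eq: "density \<nu> f = \<mu>" and \<gamma>_eq: "density \<nu> h = \<gamma>"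
    by (rule exists_common_density[OF prob_\<mu> prob_\<gamma>])
  with sets_\<mu> have sets_\<nu>: "sets \<nu> = sets borel" by simp
  note defect = overlap_defect_le_tv_dist[OF sets_\<nu> f_meas h_meas, unfolded \<mu>_eq \<gamma>_eq, OF prob_\<mu> prob_\<gamma>]
  obtain P where sets_P: "sets P = sets (borel \<Otimes>\<^sub>M borel)"
    and fst_P: "distr P borel fst = \<mu>" and snd_P: "distr P borel snd = \<gamma>"
    and off_diagonal: "emeasure P {p. fst p \<noteq> snd p} \<le> (\<integral>\<^sup>+x. f x - min (f x) (h x) \<partial>\<nu>)"
    unfolding \<mu>_eq[symmetric] \<gamma>_eq[symmetric]
    by (rule exists_coupling_of_densities[OF sets_\<nu> f_meas h_meas]) (simp_all add: \<mu>_eq \<gamma>_eq prob_\<mu> prob_\<gamma>)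
  have "prob_space P"
    by (rule prob_space_distrD[of fst P borel]) (simp_all add: fst_P prob_\<mu> measurable_cong_sets[OF sets_P refl])
  moreover have "measure P {p. fst p \<noteq> snd p} \<le> tv_dist \<mu> \<gamma>"
    using enn2real_mono[OF off_diagonal] defect by (simp add: measure_def less_top)
  ultimately show ?thesis
    using that sets_P fst_P snd_P by blast
qed

lemma
  fixes P :: "(real \<times> real) measure" and \<pi> :: "real \<times> real \<Rightarrow> real" and g :: "real \<Rightarrow> real"
  assumes "sets P = sets (borel \<Otimes>\<^sub>M borel)" and "\<pi> \<in> borel_measurable (borel \<Otimes>\<^sub>M borel)"
    and marginal: "distr P borel \<pi> = M" and "g \<in> borel_measurable borel"
  shows integrable_marginal_iff: "integrable P (\<lambda>p. g (\<pi> p)) \<longleftrightarrow> integrable M g"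
    and integral_marginal: "(\<integral>p. g (\<pi> p) \<partial>P) = (\<integral>t. g t \<partial>M)"
proof -
  have "\<pi> \<in> borel_measurable P"
    using assms(2) by (subst measurable_cong_sets[OF assms(1) refl])
  then show "integrable P (\<lambda>p. g (\<pi> p)) \<longleftrightarrow> integrable M g" "(\<integral>p. g (\<pi> p) \<partial>P) = (\<integral>t. g t \<partial>M)"
    using integrable_distr_eq[of \<pi> P borel g] integral_distr[of \<pi> P borel g] assms(4)
    unfolding marginal by simp_all
qed

lemma integral_PiM_marginal:
  fixes P :: "(real \<times> real) measure" and \<pi> :: "real \<times> real \<Rightarrow> real" and F :: "('n::finite \<Rightarrow> real) \<Rightarrow> real"
  assumes "prob_space P" and sets_P: "sets P = sets (borel \<Otimes>\<^sub>M borel)"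
    and "\<pi> \<in> borel_measurable (borel \<Otimes>\<^sub>M borel)" and marginal: "distr P borel \<pi> = M"
    and F_meas: "F \<in> borel_measurable (PiM UNIV (\<lambda>_. M))"
  shows "(\<integral>b. F b \<partial>PiM UNIV (\<lambda>_. M)) = (\<integral>\<omega>. F (\<lambda>i. \<pi> (\<omega> i)) \<partial>PiM UNIV (\<lambda>_. P))"
proof (rule integral_PiM_image_components[OF assms(1) _ _ _ F_meas])
  have \<pi>_meas: "\<pi> \<in> borel_measurable P"
    using assms(3) by (subst measurable_cong_sets[OF sets_P refl])
  then show "prob_space M"
    using prob_space.prob_space_distr[OF assms(1) \<pi>_meas] marginal by simp
  show "\<pi> \<in> measurable P M" "distr P M \<pi> = M"
    using \<pi>_meas marginal by (auto simp flip: marginal cong: distr_cong)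
qed

lemma coupling_diff_power2_squared_le:
  fixes P :: "(real \<times> real) measure"
  assumes "prob_space P" and sets_P: "sets P = sets (borel \<Otimes>\<^sub>M borel)"
    and fst_P: "distr P borel fst = \<mu>" and snd_P: "distr P borel snd = \<nu>"
    and "integrable \<mu> (\<lambda>t. t^4)" and "integrable \<nu> (\<lambda>t. t^4)"
  shows "(\<integral>p. (fst p - snd p)^2 \<partial>P)^2
    \<le> measure P {p. fst p \<noteq> snd p} * (8 * ((\<integral>t. t^4 \<partial>\<mu>) + (\<integral>t. t^4 \<partial>\<nu>)))"
proof -
  interpret prob_space P by fact
  have [measurable]: "fst \<in> borel_measurable P" "snd \<in> borel_measurable P"
    by (simp_all add: measurable_cong_sets[OF sets_P refl])
  have fourth: "integrable P (\<lambda>p. fst p^4)" "integrable P (\<lambda>p. snd p^4)"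
    "(\<integral>p. fst p^4 \<partial>P) = (\<integral>t. t^4 \<partial>\<mu>)" "(\<integral>p. snd p^4 \<partial>P) = (\<integral>t. t^4 \<partial>\<nu>)"
    using integrable_marginal_iff[OF sets_P _ fst_P, of "\<lambda>t. t^4"] integral_marginal[OF sets_P _ fst_P, of "\<lambda>t. t^4"]
      integrable_marginal_iff[OF sets_P _ snd_P, of "\<lambda>t. t^4"] integral_marginal[OF sets_P _ snd_P, of "\<lambda>t. t^4"]
      assms(5,6) by simp_all
  have diff_fourth: "integrable P (\<lambda>p. (fst p - snd p)^4)"
  proof (rule Bochner_Integration.integrable_bound)
    show "integrable P (\<lambda>p. 8 * (fst p^4 + snd p^4))" using fourth by simp
    show "AE p in P. norm ((fst p - snd p)^4) \<le> norm (8 * (fst p^4 + snd p^4))"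
      using power4_diff_le by (auto simp: zero_le_even_power)
  qed simp
  have "{p \<in> space P. fst p - snd p \<noteq> 0} = {p. fst p \<noteq> snd p}"
    using sets_eq_imp_space_eq[OF sets_P] by (auto simp: space_pair_measure)
  then have "(\<integral>p. (fst p - snd p)^2 \<partial>P)^2 \<le> measure P {p. fst p \<noteq> snd p} * (\<integral>p. (fst p - snd p)^4 \<partial>P)"
    using integral_power2_squared_le[of "\<lambda>p. fst p - snd p"] diff_fourth by simp
  also have "(\<integral>p. (fst p - snd p)^4 \<partial>P) \<le> (\<integral>p. 8 * (fst p^4 + snd p^4) \<partial>P)"
    using diff_fourth fourth power4_diff_le by (intro integral_mono) auto
  then have "measure P {p. fst p \<noteq> snd p} * (\<integral>p. (fst p - snd p)^4 \<partial>P)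
      \<le> measure P {p. fst p \<noteq> snd p} * (8 * ((\<integral>t. t^4 \<partial>\<mu>) + (\<integral>t. t^4 \<partial>\<nu>)))"
    using fourth by (intro mult_left_mono) simp_all
  finally show ?thesis .
qed

lemma coupling_diff_moments:
  fixes P :: "(real \<times> real) measure"
  assumes "prob_space P" and sets_P: "sets P = sets (borel \<Otimes>\<^sub>M borel)"
    and fst_P: "distr P borel fst = \<mu>" and snd_P: "distr P borel snd = \<nu>"
    and "integrable \<mu> (\<lambda>t. t^2)" and "integrable \<nu> (\<lambda>t. t^2)" and "(\<integral>t. t \<partial>\<mu>) = (\<integral>t. t \<partial>\<nu>)"
  shows "integrable P fst" and "integrable P snd"
    and "integrable P (\<lambda>p. (fst p - snd p)^2)" and "(\<integral>p. fst p - snd p \<partial>P) = 0"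
proof -
  interpret P: prob_space P by fact
  have [measurable]: "fst \<in> borel_measurable P" "snd \<in> borel_measurable P"
    by (simp_all add: measurable_cong_sets[OF sets_P refl])
  have squares: "integrable P (\<lambda>p. fst p^2)" "integrable P (\<lambda>p. snd p^2)"
    using integrable_marginal_iff[OF sets_P _ fst_P, of "\<lambda>t. t^2"]
      integrable_marginal_iff[OF sets_P _ snd_P, of "\<lambda>t. t^2"] assms(5,6) by simp_all
  then show "integrable P fst" "integrable P snd"
    by (auto intro: P.square_integrable_imp_integrable)
  moreover have "(\<integral>p. fst p \<partial>P) = (\<integral>p. snd p \<partial>P)"
    using integral_marginal[OF sets_P _ fst_P, of "\<lambda>t. t"] integral_marginal[OF sets_P _ snd_P, of "\<lambda>t. t"]
      assms(7) by simp
  ultimately show "(\<integral>p. fst p - snd p \<partial>P) = 0" by simp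
  show "integrable P (\<lambda>p. (fst p - snd p)^2)"
  proof (rule Bochner_Integration.integrable_bound)
    show "integrable P (\<lambda>p. 2 * (fst p^2 + snd p^2))" using squares by simp
    show "AE p in P. norm ((fst p - snd p)^2) \<le> norm (2 * (fst p^2 + snd p^2))"
    proof (rule AE_I2)
      fix p :: "real \<times> real"
      have "0 \<le> (fst p + snd p)^2" by simp
      then have "(fst p - snd p)^2 \<le> 2 * (fst p^2 + snd p^2)"
        by (simp add: power2_diff power2_sum)
      then show "norm ((fst p - snd p)^2) \<le> norm (2 * (fst p^2 + snd p^2))"
        by (simp add: abs_of_nonneg)
    qed
  qed simp
qed

lemma abs_diff_integral_abs_le:
  fixes U W :: "'a \<Rightarrow> real"
  assumes "integrable M U" and "integrable M W"
  shows "\<bar>(\<integral>\<omega>. \<bar>U \<omega>\<bar> \<partial>M) - (\<integral>\<omega>. \<bar>W \<omega>\<bar> \<partial>M)\<bar> \<le> (\<integral>\<omega>. \<bar>U \<omega> - W \<omega>\<bar> \<partial>M)"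
proof -
  have "\<bar>(\<integral>\<omega>. \<bar>U \<omega>\<bar> \<partial>M) - (\<integral>\<omega>. \<bar>W \<omega>\<bar> \<partial>M)\<bar> = \<bar>\<integral>\<omega>. \<bar>U \<omega>\<bar> - \<bar>W \<omega>\<bar> \<partial>M\<bar>"
    using assms by simp
  also have "\<dots> \<le> (\<integral>\<omega>. \<bar>\<bar>U \<omega>\<bar> - \<bar>W \<omega>\<bar>\<bar> \<partial>M)"
    using integral_norm_bound[of M "\<lambda>\<omega>. \<bar>U \<omega>\<bar> - \<bar>W \<omega>\<bar>"] by simp
  also have "\<dots> \<le> (\<integral>\<omega>. \<bar>U \<omega> - W \<omega>\<bar> \<partial>M)"
    using assms by (intro integral_mono) (simp_all add: abs_triangle_ineq3)
  finally show ?thesis .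
qed

lemma coupling_abs_inner_diff_le:
  fixes P :: "(real \<times> real) measure" and x :: "'n::finite \<Rightarrow> real"
  assumes "prob_space P" and sets_P: "sets P = sets (borel \<Otimes>\<^sub>M borel)"
    and fst_P: "distr P borel fst = \<mu>" and snd_P: "distr P borel snd = \<nu>"
    and "integrable \<mu> (\<lambda>t. t^2)" and "integrable \<nu> (\<lambda>t. t^2)" and "(\<integral>t. t \<partial>\<mu>) = (\<integral>t. t \<partial>\<nu>)"
    and x_unit: "(\<Sum>i\<in>UNIV. (x i)^2) = 1"
  defines "ip \<equiv> \<lambda>a. \<Sum>i\<in>UNIV. a i * x i"
  shows "\<bar>(\<integral>a. \<bar>ip a\<bar> \<partial>PiM UNIV (\<lambda>_. \<mu>)) - (\<integral>a. \<bar>ip a\<bar> \<partial>PiM UNIV (\<lambda>_. \<nu>))\<bar>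
    \<le> sqrt (\<integral>p. (fst p - snd p)^2 \<partial>P)"
proof -
  interpret P: prob_space P by fact
  note moments = coupling_diff_moments[OF assms(1-7)]
  \<comment> \<open>couple the two product measures coordinatewise\<close>
  define \<Omega> where "\<Omega> = PiM (UNIV :: 'n set) (\<lambda>_. P)"
  interpret \<Omega>: prob_space \<Omega> unfolding \<Omega>_def by (intro prob_space_PiM P.prob_space_axioms)
  define U where "U = (\<lambda>\<omega> :: 'n \<Rightarrow> real \<times> real. ip (\<lambda>i. fst (\<omega> i)))"
  define W where "W = (\<lambda>\<omega> :: 'n \<Rightarrow> real \<times> real. ip (\<lambda>i. snd (\<omega> i)))"
  have sets_marginals [measurable_cong]: "sets \<mu> = sets borel" "sets \<nu> = sets borel"
    by (simp_all flip: fst_P snd_P)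
  have [measurable]: "fst \<in> borel_measurable P" "snd \<in> borel_measurable P"
    by (simp_all add: measurable_cong_sets[OF sets_P refl])
  have "(\<lambda>a. \<bar>ip a\<bar>) \<in> borel_measurable (PiM UNIV (\<lambda>_. \<mu>))"
    "(\<lambda>a. \<bar>ip a\<bar>) \<in> borel_measurable (PiM UNIV (\<lambda>_. \<nu>))"
    unfolding ip_def by measurable
  then have "(\<integral>a. \<bar>ip a\<bar> \<partial>PiM UNIV (\<lambda>_. \<mu>)) = (\<integral>\<omega>. \<bar>U \<omega>\<bar> \<partial>\<Omega>)"
    "(\<integral>a. \<bar>ip a\<bar> \<partial>PiM UNIV (\<lambda>_. \<nu>)) = (\<integral>\<omega>. \<bar>W \<omega>\<bar> \<partial>\<Omega>)"
    unfolding U_def W_def \<Omega>_def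
    by (simp_all add: integral_PiM_marginal[OF assms(1) sets_P _ fst_P] integral_PiM_marginal[OF assms(1) sets_P _ snd_P])
  moreover have "integrable \<Omega> (\<lambda>\<omega>. fst (\<omega> i))" "integrable \<Omega> (\<lambda>\<omega>. snd (\<omega> i))" for i
    unfolding \<Omega>_def using moments(1,2)
    by (auto intro: integrable_PiM_component_iff[OF P.prob_space_axioms, THEN iffD2])
  then have "integrable \<Omega> U" "integrable \<Omega> W"
    by (simp_all add: U_def W_def ip_def)
  ultimately have "\<bar>(\<integral>a. \<bar>ip a\<bar> \<partial>PiM UNIV (\<lambda>_. \<mu>)) - (\<integral>a. \<bar>ip a\<bar> \<partial>PiM UNIV (\<lambda>_. \<nu>))\<bar>
      \<le> (\<integral>\<omega>. \<bar>\<Sum>i\<in>UNIV. x i * (fst (\<omega> i) - snd (\<omega> i))\<bar> \<partial>\<Omega>)"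
    using abs_diff_integral_abs_le[of \<Omega> U W]
    by (simp add: U_def W_def ip_def sum_subtractf[symmetric] algebra_simps)
  also have "\<dots> \<le> sqrt (\<integral>p. (fst p - snd p)^2 \<partial>P)"
  proof -
    note Z_sq = integral_PiM_weighted_sum_square[OF P.prob_space_axioms _ moments(3,4), of x]
    show ?thesis
      using \<Omega>.integral_abs_squared_le[of "\<lambda>\<omega>. \<Sum>i\<in>UNIV. x i * (fst (\<omega> i) - snd (\<omega> i))"] Z_sq x_unit
      by (simp add: \<Omega>_def real_le_rsqrt)
  qed
  finally show ?thesis .
qed

lemma sum_integral_sign_pm_mult_eq:
  fixes A :: "('n::finite \<Rightarrow> real) measure" and x :: "'n \<Rightarrow> real"
  assumes "\<And>i. integrable A (\<lambda>a. a i)"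
  defines "ip \<equiv> \<lambda>a. \<Sum>i\<in>UNIV. a i * x i"
  shows "(\<Sum>i\<in>UNIV. (\<integral>a. sign_pm (ip a) * a i \<partial>A) * x i) = (\<integral>a. \<bar>ip a\<bar> \<partial>A)"
proof -
  have [measurable]: "(\<lambda>a. a i) \<in> borel_measurable A" for i
    using assms(1) by blast
  have sign_meas: "(\<lambda>a. sign_pm (ip a)) \<in> borel_measurable A"
    unfolding sign_pm_def ip_def by measurable
  have integrable: "integrable A (\<lambda>a. sign_pm (ip a) * a i * x i)" for i
  proof (rule Bochner_Integration.integrable_bound)
    show "integrable A (\<lambda>a. a i * x i)" using assms(1) by simp
    show "AE a in A. norm (sign_pm (ip a) * a i * x i) \<le> norm (a i * x i)"
      by (simp add: sign_pm_def abs_mult)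
  qed (use sign_meas in simp)
  have "(\<Sum>i\<in>UNIV. (\<integral>a. sign_pm (ip a) * a i \<partial>A) * x i) = (\<integral>a. (\<Sum>i\<in>UNIV. sign_pm (ip a) * a i * x i) \<partial>A)"
    using integrable by simp
  also have "\<dots> = (\<integral>a. \<bar>ip a\<bar> \<partial>A)"
    by (simp add: ip_def sum_distrib_left mult.assoc flip: sign_pm_mult_self)
  finally show ?thesis .
qed

lemma root4_bound:
  fixes d v w e :: real
  assumes "0 \<le> d" and "d \<le> sqrt v" and "v^2 \<le> 8 * (w * e)" and "0 \<le> w" and "0 \<le> e"
  shows "d \<le> 4 * w powr (1/4) * e powr (1/4)"
proof -
  have "0 \<le> sqrt v" using assms(1,2) by linarith
  then have "d^2 \<le> v"
    using assms(1,2) power_mono[of d "sqrt v" 2] by simp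
  then have "d^4 \<le> v^2"
    using assms(1) power_mono[of "d^2" v 2] by (simp flip: power_mult)
  also have "v^2 \<le> 256 * (w * e)" using assms(3-5) mult_nonneg_nonneg[of w e] by linarith
  also have "\<dots> = (4 * w powr (1/4) * e powr (1/4))^4"
  proof -
    have root: "(t powr (1/4))^4 = t" if "0 \<le> t" for t :: real
      using that by (cases "t = 0") (simp_all add: powr_power)
    show ?thesis using root[OF assms(4)] root[OF assms(5)] by (simp add: power_mult_distrib)
  qed
  finally show ?thesis
    using assms(1,4,5) by (subst (asm) power_mono_iff) auto
qed

lemma tv_dist_nonneg:
  assumes "prob_space \<mu>" and "prob_space \<gamma>"
  shows "0 \<le> tv_dist \<mu> \<gamma>"
  using abs_measure_diff_le_tv_dist[OF assms, of "{}"] by simp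

lemma abs_inner_expectation_diff_le_tv_dist:
  fixes \<mu> \<nu> :: "real measure" and x :: "'n::finite \<Rightarrow> real"
  assumes prob: "prob_space \<mu>" "prob_space \<nu>" and sets: "sets \<mu> = sets borel" "sets \<nu> = sets borel"
    and fourth: "integrable \<mu> (\<lambda>t. t^4)" "integrable \<nu> (\<lambda>t. t^4)"
    and "(\<integral>t. t \<partial>\<mu>) = (\<integral>t. t \<partial>\<nu>)" and "(\<Sum>i\<in>UNIV. (x i)^2) = 1"
  defines "ip \<equiv> \<lambda>a. \<Sum>i\<in>UNIV. a i * x i"
  shows "\<bar>(\<integral>a. \<bar>ip a\<bar> \<partial>PiM UNIV (\<lambda>_. \<mu>)) - (\<integral>a. \<bar>ip a\<bar> \<partial>PiM UNIV (\<lambda>_. \<nu>))\<bar>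
    \<le> 4 * ((\<integral>t. t^4 \<partial>\<mu>) + (\<integral>t. t^4 \<partial>\<nu>)) powr (1/4) * tv_dist \<mu> \<nu> powr (1/4)"
proof -
  obtain P where coupling: "prob_space P" "sets P = sets (borel \<Otimes>\<^sub>M borel)"
      "distr P borel fst = \<mu>" "distr P borel snd = \<nu>"
    and off_diagonal: "measure P {p. fst p \<noteq> snd p} \<le> tv_dist \<mu> \<nu>"
    by (rule exists_coupling_tv_dist[OF prob sets])
  define W where "W = (\<integral>t. t^4 \<partial>\<mu>) + (\<integral>t. t^4 \<partial>\<nu>)"
  define V where "V = (\<integral>p. (fst p - snd p)^2 \<partial>P)"
  have "0 \<le> W"
    unfolding W_def by (intro add_nonneg_nonneg integral_nonneg_AE) (simp_all add: zero_le_even_power)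
  have "integrable \<mu> (\<lambda>t. t^2)" "integrable \<nu> (\<lambda>t. t^2)"
    using finite_measure.integrable_power2_if_power4[OF prob_space.finite_measure[OF prob(1)] _ fourth(1)]
      finite_measure.integrable_power2_if_power4[OF prob_space.finite_measure[OF prob(2)] _ fourth(2)]
      measurable_ident_sets[OF sets(1)] measurable_ident_sets[OF sets(2)] by simp_all
  from coupling_abs_inner_diff_le[OF coupling this assms(7,8)]
  have "\<bar>(\<integral>a. \<bar>ip a\<bar> \<partial>PiM UNIV (\<lambda>_. \<mu>)) - (\<integral>a. \<bar>ip a\<bar> \<partial>PiM UNIV (\<lambda>_. \<nu>))\<bar> \<le> sqrt V"
    unfolding ip_def V_def .
  moreover have "V^2 \<le> 8 * (W * tv_dist \<mu> \<nu>)"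
  proof -
    have "V^2 \<le> measure P {p. fst p \<noteq> snd p} * (8 * W)"
      unfolding V_def W_def by (rule coupling_diff_power2_squared_le[OF coupling fourth])
    also have "\<dots> \<le> tv_dist \<mu> \<nu> * (8 * W)"
      using \<open>0 \<le> W\<close> by (intro mult_right_mono[OF off_diagonal]) simp
    finally show ?thesis by (simp add: ac_simps)
  qed
  ultimately show ?thesis
    unfolding W_def[symmetric] using \<open>0 \<le> W\<close> tv_dist_nonneg[OF prob] by (intro root4_bound) simp_all
qed

theorem lemma5p3:
  fixes \<mu> :: "real measure" and x :: "'n::finite \<Rightarrow> real" and \<epsilon> :: real
  assumes "prob_space \<mu>" and "sets \<mu> = sets borel"
    and "symmetric_law \<mu>" and "subgaussian \<mu>"
    and "integrable \<mu> (\<lambda>t. t^2)" and "(\<integral>t. t^2 \<partial>\<mu>) = 1"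
    and "tv_dist \<mu> gauss \<le> \<epsilon>"
    and "(\<Sum>i\<in>UNIV. (x i)^2) = 1"
  shows "let A = PiM (UNIV :: 'n set) (\<lambda>_. \<mu>);
             ip = (\<lambda>a. \<Sum>i\<in>UNIV. a i * x i);
             v = (\<lambda>i. \<integral>a. sign_pm (ip a) * a i \<partial>A);
             lam = sqrt (2 / pi)
         in \<bar>(\<Sum>i\<in>UNIV. v i * x i) - lam\<bar> = \<bar>(\<integral>a. \<bar>ip a\<bar> \<partial>A) - sqrt (2 / pi)\<bar>
          \<and> \<bar>(\<integral>a. \<bar>ip a\<bar> \<partial>A) - sqrt (2 / pi)\<bar>
              \<le> 4 * ((\<integral>t. t^4 \<partial>\<mu>) + (\<integral>t. t^4 \<partial>gauss)) powr (1/4) * \<epsilon> powr (1/4)"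
proof -
  note prob = \<open>prob_space \<mu>\<close> and sets = \<open>sets \<mu> = sets borel\<close>
  define ip where "ip = (\<lambda>a :: 'n \<Rightarrow> real. \<Sum>i\<in>UNIV. a i * x i)"
  define W where "W = (\<integral>t. t^4 \<partial>\<mu>) + (\<integral>t. t^4 \<partial>gauss)"
  have "(\<integral>t. t \<partial>\<mu>) = (\<integral>t. t \<partial>gauss)"
    using symmetric_law_integral_id[OF assms(3) sets] integral_gauss_id by simp
  from abs_inner_expectation_diff_le_tv_dist[OF prob prob_space_gauss sets sets_gauss
      subgaussian_integrable_power[OF prob sets assms(4)] integrable_gauss_power this assms(8)]
  have "\<bar>(\<integral>a. \<bar>ip a\<bar> \<partial>PiM UNIV (\<lambda>_. \<mu>)) - sqrt (2 / pi)\<bar> \<le> 4 * W powr (1/4) * tv_dist \<mu> gauss powr (1/4)"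
    unfolding integral_abs_inner_PiM_gauss[OF assms(8)] ip_def W_def .
  also have "\<dots> \<le> 4 * W powr (1/4) * \<epsilon> powr (1/4)"
    using powr_mono2[OF _ tv_dist_nonneg[OF prob prob_space_gauss] assms(7), of "1/4"]
    by (intro mult_left_mono) simp_all
  finally have bound: "\<bar>(\<integral>a. \<bar>ip a\<bar> \<partial>PiM UNIV (\<lambda>_. \<mu>)) - sqrt (2 / pi)\<bar> \<le> 4 * W powr (1/4) * \<epsilon> powr (1/4)" .
  have "integrable (PiM UNIV (\<lambda>_. \<mu>)) (\<lambda>a. a i)" for i :: 'n
    using integrable_PiM_component_iff[OF prob measurable_ident_sets[OF sets], of i]
      subgaussian_integrable_power[OF prob sets assms(4), of 1] by simp
  then have sign: "(\<Sum>i\<in>UNIV. (\<integral>a. sign_pm (ip a) * a i \<partial>PiM UNIV (\<lambda>_. \<mu>)) * x i)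
      = (\<integral>a. \<bar>ip a\<bar> \<partial>PiM UNIV (\<lambda>_. \<mu>))"
    unfolding ip_def by (rule sum_integral_sign_pm_mult_eq)
  show ?thesis
    using sign bound unfolding Let_def ip_def[symmetric] W_def[symmetric] by (intro conjI) (simp_all only:)
qed

end
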